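(* Let $X$ be a BMC with kernel $\mathcal P$ and initial distribution $\nu$ such that Assumptions (F) and (F2) hold with $\alpha\in(0,1/\sqrt2)$, and let $\mathfrak f=(f_\ell,\ell\in\mathbb N)$ be a sequence in $F$ such that there is $g\in F$ with $|\mathcal Q^nf_\ell|\le g$ and $|\mathcal Q^nf_\ell-\langle\mu,f_\ell\rangle|\le\alpha^ng$ for all $n,\ell$. Let $(p_n)$ be a sequence as described in the context and $$R_0(n)=|\mathbb G_n|^{-1/2}\sum_{k=0}^{n-p_n-1}M_{\mathbb G_k}(\tilde f_{n-k}).$$ Then $\lim_{n\to\infty}\mathbb E[R_0(n)^2]=0$.
   Context: Let $(S,\mathscr S)$ be a measurable space. Let $\mathbb G_0=\{\emptyset\}$, $\mathbb G_k=\{0,1\}^k$ (words of length $k$), $\mathbb T_n=\bigcup_{r=0}^n\mathbb G_r$, $\mathbb T=\bigcup_{r\ge0}\mathbb G_r$; $|\mathbb G_n|=2^n$. Let $\mathcal P$ be a probability kernel from $S$ to $S^2$ and $\nu$ a probability measure on $S$. For $g:S^3\to\mathbb R$, $\mathcal Pg(x)=\int g(x,y,z)\mathcal P(x,dy,dz)$, and for $h:S^2\to\mathbb R$, $\mathcal Ph(x)=\int h(y,z)\mathcal P(x,dy,dz)$. A BMC with initial distribution $\nu$ and kernel $\mathcal P$ is a process $X=(X_i,i\in\mathbb T)$ with $X_\emptyset\sim\nu$ such that for all $k\ge0$ and bounded measurable $g_i:S^3\to\mathbb R$, $\mathbb E[\prod_{i\in\mathbb G_k}g_i(X_i,X_{i0},X_{i1})\mid\sigma(X_j,j\in\mathbb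 T_k)]=\prod_{i\in\mathbb G_k}\mathcal Pg_i(X_i)$. Let $\mathcal Q(x,A)=\frac12(\mathcal P(x,A\times S)+\mathcal P(x,S\times A))$, $\mathcal Qf(x)=\int f(y)\mathcal Q(x,dy)$, $\mathcal Q^n$ its iterates. Notation: $(f\otimes g)(x,y)=f(x)g(y)$, $\langle\mu,f\rangle=\int f\,d\mu$, $\tilde f=f-\langle\mu,f\rangle$, $M_A(f)=\sum_{i\in A}f(X_i)$. Assumption (F): $F$ is a set of real measurable functions on $S$ such that (i) $F$ is a vector space containing the constants; (ii) $f\in F\Rightarrow f^2\in F$; (iii) $F\subset L^1(\nu)$; (iv) for all $f_0,f_1\in F$ and $x\in S$, $f_0\otimes f_1\in L^1(\mathcal P(x,\cdot))$ and $\mathcal P(f_0\otimes f_1)\in F$. Assumption (F2): there exist a probability measure $\mu$ on $S$ (invariant for $\mathcal Q$) with $F\subset L^1(\mu)$ and $\alpha\in(0,1)$ such that for every $f\in F$ there is $g\in F$ with $|\mathcal Q^nf-\langle\mu,f\rangle|\le\alpha^ng$ for all $n$. The sequence $(p_n,n\in\mathbb N)$ is a non-decreasing sequence of positive integers with $p_n<n$, $\lim_n p_n/n=1$, and $\lim_n(n-p_n-\lambda\log n)=+\infty$ for every $\lambda>0$. *)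

theory Defs
  imports "HOL-Probability.Probability"
begin

text \<open>Binary tree index sets: words over {0,1} are bool lists (False = 0, True = 1).\<close>

definition Gen :: "nat \<Rightarrow> bool list set" where
  "Gen k = {i. length i = k}"

definition Tree_upto :: "nat \<Rightarrow> bool list set" where
  "Tree_upto n = {i. length i \<le> n}"

definition Pop3 :: "('a \<Rightarrow> ('a \<times> 'a) measure) \<Rightarrow> ('a \<times> 'a \<times> 'a \<Rightarrow> real) \<Rightarrow> 'a \<Rightarrow> real" where
  "Pop3 P g x = (\<integral>yz. g (x, fst yz, snd yz) \<partial>(P x))"

definition Pop2 :: "('a \<Rightarrow> ('a \<times> 'a) measure) \<Rightarrow> ('a \<times> 'a \<Rightarrow> real) \<Rightarrow> 'a \<Rightarrow> real" where
  "Pop2 P h x = (\<integral>yz. h yz \<partial>(P x))"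

definition Qop :: "('a \<Rightarrow> ('a \<times> 'a) measure) \<Rightarrow> ('a \<Rightarrow> real) \<Rightarrow> 'a \<Rightarrow> real" where
  "Qop P f x = ((\<integral>yz. f (fst yz) \<partial>(P x)) + (\<integral>yz. f (snd yz) \<partial>(P x))) / 2"

definition tree_filtr :: "'w measure \<Rightarrow> 'a measure \<Rightarrow> (bool list \<Rightarrow> 'w \<Rightarrow> 'a) \<Rightarrow> nat \<Rightarrow> 'w measure" where
  "tree_filtr \<Omega> M X k =
     sigma (space \<Omega>) (\<Union>j\<in>Tree_upto k. {X j -` A \<inter> space \<Omega> | A. A \<in> sets M})"

definition is_BMC :: "'a measure \<Rightarrow> 'w measure \<Rightarrow> (bool list \<Rightarrow> 'w \<Rightarrow> 'a)
    \<Rightarrow> 'a measure \<Rightarrow> ('a \<Rightarrow> ('a \<times> 'a) measure) \<Rightarrow> bool" where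
  "is_BMC M \<Omega> X \<nu> P \<longleftrightarrow>
     prob_space \<Omega> \<and> (\<forall>i. X i \<in> \<Omega> \<rightarrow>\<^sub>M M) \<and> distr \<Omega> M (X []) = \<nu> \<and>
     (\<forall>k (g :: bool list \<Rightarrow> 'a \<times> 'a \<times> 'a \<Rightarrow> real).
        (\<forall>i. g i \<in> borel_measurable (M \<Otimes>\<^sub>M M \<Otimes>\<^sub>M M) \<and>
             (\<exists>B. \<forall>x\<in>space (M \<Otimes>\<^sub>M M \<Otimes>\<^sub>M M). \<bar>g i x\<bar> \<le> B)) \<longrightarrow>
        (AE \<omega> in \<Omega>.
           real_cond_exp \<Omega> (tree_filtr \<Omega> M X k)
             (\<lambda>\<omega>. \<Prod>i\<in>Gen k. g i (X i \<omega>, X (i @ [False]) \<omega>, X (i @ [True]) \<omega>)) \<omega>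
           = (\<Prod>i\<in>Gen k. Pop3 P (g i) (X i \<omega>))))"

definition assumption_F :: "'a measure \<Rightarrow> ('a \<Rightarrow> ('a \<times> 'a) measure) \<Rightarrow> 'a measure
    \<Rightarrow> ('a \<Rightarrow> real) set \<Rightarrow> bool" where
  "assumption_F M P \<nu> F \<longleftrightarrow>
     F \<subseteq> borel_measurable M \<and>
     (\<forall>f\<in>F. \<forall>h\<in>F. (\<lambda>x. f x + h x) \<in> F) \<and>
     (\<forall>c::real. \<forall>f\<in>F. (\<lambda>x. c * f x) \<in> F) \<and>
     (\<forall>c::real. (\<lambda>_. c) \<in> F) \<and>
     (\<forall>f\<in>F. (\<lambda>x. (f x)\<^sup>2) \<in> F) \<and>
     (\<forall>f\<in>F. integrable \<nu> f) \<and>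
     (\<forall>f0\<in>F. \<forall>f1\<in>F.
        (\<forall>x\<in>space M. integrable (P x) (\<lambda>yz. f0 (fst yz) * f1 (snd yz))) \<and>
        Pop2 P (\<lambda>yz. f0 (fst yz) * f1 (snd yz)) \<in> F)"

definition assumption_F2 :: "'a measure \<Rightarrow> ('a \<Rightarrow> ('a \<times> 'a) measure)
    \<Rightarrow> ('a \<Rightarrow> real) set \<Rightarrow> 'a measure \<Rightarrow> real \<Rightarrow> bool" where
  "assumption_F2 M P F \<mu> \<alpha> \<longleftrightarrow>
     prob_space \<mu> \<and> sets \<mu> = sets M \<and>
     (\<forall>A\<in>sets M. (\<integral>x. (measure (P x) (A \<times> space M) + measure (P x) (space M \<times> A)) / 2 \<partial>\<mu>)
                   = measure \<mu> A) \<and>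
     (\<forall>f\<in>F. integrable \<mu> f) \<and> 0 < \<alpha> \<and> \<alpha> < 1 \<and>
     (\<forall>f\<in>F. \<exists>g\<in>F. \<forall>n. \<forall>x\<in>space M.
        \<bar>(Qop P ^^ n) f x - (\<integral>y. f y \<partial>\<mu>)\<bar> \<le> \<alpha> ^ n * g x)"

definition MA :: "(bool list \<Rightarrow> 'w \<Rightarrow> 'a) \<Rightarrow> bool list set \<Rightarrow> ('a \<Rightarrow> real) \<Rightarrow> 'w \<Rightarrow> real" where
  "MA X A f \<omega> = (\<Sum>i\<in>A. f (X i \<omega>))"

definition R0 :: "(bool list \<Rightarrow> 'w \<Rightarrow> 'a) \<Rightarrow> 'a measure \<Rightarrow> (nat \<Rightarrow> 'a \<Rightarrow> real)
    \<Rightarrow> (nat \<Rightarrow> nat) \<Rightarrow> nat \<Rightarrow> 'w \<Rightarrow> real" where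
  "R0 X \<mu> fs p n \<omega> =
     (1 / sqrt (real (card (Gen n)))) *
     (\<Sum>k<n - p n. MA X (Gen k) (\<lambda>x. fs (n - k) x - (\<integral>y. fs (n - k) y \<partial>\<mu>)) \<omega>)"

end

theory Submission
  imports Defs "HOL-Real_Asymp.Real_Asymp"
begin

text \<open>
  A crude second-moment bound suffices. With \<open>N = n - p n\<close>, every \<open>(f l - \<langle>\<mu>, f l\<rangle>)\<^sup>2\<close> is
  dominated by \<open>G = 2 g\<^sup>2 + 2 \<langle>\<mu>, g\<rangle>\<^sup>2 \<in> F\<close>, so Cauchy-Schwarz within and across generations
  gives \<open>R0(n)\<^sup>2 \<le> N 2\<^sup>-\<^sup>n \<Sum>k<N. 2\<^sup>k M_{G_k}(G)\<close>. The branching property, applied to bounded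
  truncations of \<open>G\<close> and iterated down the tree, yields \<open>E M_{G_k}(G) \<le> 2\<^sup>k \<langle>\<nu>, Q\<^sup>k G\<rangle>\<close>, and
  (F2) bounds \<open>\<langle>\<nu>, Q\<^sup>k G\<rangle>\<close> uniformly in \<open>k\<close>. Hence \<open>E R0(n)\<^sup>2 \<le> C N 4\<^sup>N 2\<^sup>-\<^sup>n\<close>, which
  tends to \<open>0\<close> because \<open>N / n \<rightarrow> 0\<close>.
\<close>

lemma finite_Gen: "finite (Gen k)"
  using finite_lists_length_eq[of "UNIV :: bool set" k] by (simp add: Gen_def)

lemma card_Gen: "card (Gen k) = 2 ^ k"
  using card_lists_length_eq[of "UNIV :: bool set" k] by (simp add: Gen_def)

lemma sum_Gen_Suc:
  "(\<Sum>j\<in>Gen (Suc k). h j) = (\<Sum>i\<in>Gen k. h (i @ [False]) + h (i @ [True]))"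
proof -
  have "Gen (Suc k) = (\<lambda>(i, b). i @ [b]) ` (Gen k \<times> UNIV)"
  proof (intro equalityI subsetI)
    fix j assume "j \<in> Gen (Suc k)"
    then have "j = butlast j @ [last j]" and "butlast j \<in> Gen k"
      by (auto simp: Gen_def intro!: append_butlast_last_id[symmetric])
    then show "j \<in> (\<lambda>(i, b). i @ [b]) ` (Gen k \<times> UNIV)"
      by (metis (no_types, lifting) SigmaI UNIV_I case_prod_conv image_eqI)
  qed (auto simp: Gen_def)
  moreover have "inj_on (\<lambda>(i, b). i @ [b]) (Gen k \<times> UNIV)"
    by (auto simp: inj_on_def)
  ultimately have "(\<Sum>j\<in>Gen (Suc k). h j) = (\<Sum>i\<in>Gen k. \<Sum>b\<in>UNIV. h (i @ [b]))"
    by (simp add: sum.reindex sum.cartesian_product case_prod_beta')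
  then show ?thesis
    by (simp add: UNIV_bool add.commute)
qed

lemma sq_sum_Gen_le:
  fixes y :: "nat \<Rightarrow> bool list \<Rightarrow> real"
  shows "(\<Sum>k<N. \<Sum>i\<in>Gen k. y k i)\<^sup>2 \<le> real N * (\<Sum>k<N. 2 ^ k * (\<Sum>i\<in>Gen k. (y k i)\<^sup>2))"
proof -
  have level: "(\<Sum>i\<in>Gen k. y k i)\<^sup>2 \<le> 2 ^ k * (\<Sum>i\<in>Gen k. (y k i)\<^sup>2)" for k
    using sum_squared_le_sum_of_squares[of "y k" "Gen k"] by (simp add: card_Gen mult.commute)
  have "(\<Sum>k<N. \<Sum>i\<in>Gen k. y k i)\<^sup>2 \<le> real N * (\<Sum>k<N. (\<Sum>i\<in>Gen k. y k i)\<^sup>2)"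
    using sum_squared_le_sum_of_squares[of "\<lambda>k. \<Sum>i\<in>Gen k. y k i" "{..<N}"]
    by (simp add: mult.commute)
  also have "\<dots> \<le> real N * (\<Sum>k<N. 2 ^ k * (\<Sum>i\<in>Gen k. (y k i)\<^sup>2))"
    by (intro mult_left_mono sum_mono level) auto
  finally show ?thesis .
qed

lemma sum_power_le_power:
  fixes x :: real
  assumes "2 \<le> x"
  shows "(\<Sum>k<N. x ^ k) \<le> x ^ N"
proof (induction N)
  case (Suc N)
  have "2 * x ^ N \<le> x * x ^ N"
    using assms by (intro mult_right_mono) auto
  then show ?case
    using Suc.IH by simp
qed simp

lemma centered_sq_le:
  fixes a b g m :: real
  assumes "\<bar>a\<bar> \<le> g" and "\<bar>b\<bar> \<le> m"
  shows "(a - b)\<^sup>2 \<le> 2 * g\<^sup>2 + 2 * m\<^sup>2"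
proof -
  have "(a - b)\<^sup>2 \<le> 2 * a\<^sup>2 + 2 * b\<^sup>2"
    using zero_le_power2[of "a + b"] by (simp add: power2_eq_square algebra_simps)
  moreover have "a\<^sup>2 \<le> g\<^sup>2" and "b\<^sup>2 \<le> m\<^sup>2"
    using assms abs_le_square_iff[of a g] abs_le_square_iff[of b m] by auto
  ultimately show ?thesis by linarith
qed

lemma SUP_ennreal_min_of_nat: "(SUP N::nat. ennreal (min a (real N))) = ennreal a"
proof (rule antisym)
  show "(SUP N::nat. ennreal (min a (real N))) \<le> ennreal a"
    by (rule SUP_least) (auto intro: ennreal_leI)
  obtain N :: nat where "a \<le> real N"
    using real_arch_simple by blast
  then show "ennreal a \<le> (SUP N::nat. ennreal (min a (real N)))"
    by (intro SUP_upper2[of N]) auto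
qed

lemma nn_integral_sum_cmult:
  assumes "finite I" and "\<And>i. i \<in> I \<Longrightarrow> 0 \<le> c i"
    and "\<And>i. i \<in> I \<Longrightarrow> h i \<in> borel_measurable \<Omega>"
    and "\<And>i \<omega>. i \<in> I \<Longrightarrow> \<omega> \<in> space \<Omega> \<Longrightarrow> 0 \<le> h i \<omega>"
  shows "(\<integral>\<^sup>+\<omega>. ennreal (\<Sum>i\<in>I. c i * h i \<omega>) \<partial>\<Omega>)
       = (\<Sum>i\<in>I. ennreal (c i) * (\<integral>\<^sup>+\<omega>. ennreal (h i \<omega>) \<partial>\<Omega>))"
proof -
  have "(\<integral>\<^sup>+\<omega>. ennreal (\<Sum>i\<in>I. c i * h i \<omega>) \<partial>\<Omega>)
      = (\<integral>\<^sup>+\<omega>. (\<Sum>i\<in>I. ennreal (c i) * ennreal (h i \<omega>)) \<partial>\<Omega>)"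
    using assms(2,4) by (intro nn_integral_cong) (simp add: ennreal_mult sum_ennreal[symmetric])
  also have "\<dots> = (\<Sum>i\<in>I. \<integral>\<^sup>+\<omega>. ennreal (c i) * ennreal (h i \<omega>) \<partial>\<Omega>)"
    using assms(3) by (intro nn_integral_sum) auto
  also have "\<dots> = (\<Sum>i\<in>I. ennreal (c i) * (\<integral>\<^sup>+\<omega>. ennreal (h i \<omega>) \<partial>\<Omega>))"
    using assms(3) by (intro sum.cong refl nn_integral_cmult) auto
  finally show ?thesis .
qed

lemma
  assumes "L \<in> M \<rightarrow>\<^sub>M prob_algebra N" and "x \<in> space M"
  shows prob_space_kernel: "prob_space (L x)"
    and space_kernel: "space (L x) = space N"
proof -
  have "L x \<in> space (prob_algebra N)"
    using measurable_space[OF assms] .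
  then have "sets (L x) = sets N" and "prob_space (L x)"
    by (simp_all add: space_prob_algebra)
  then show "prob_space (L x)" and "space (L x) = space N"
    using sets_eq_imp_space_eq by blast+
qed

lemma
  assumes "assumption_F M P \<nu> F"
  shows assumption_F_measurable: "f \<in> F \<Longrightarrow> f \<in> borel_measurable M"
    and assumption_F_add: "f \<in> F \<Longrightarrow> h \<in> F \<Longrightarrow> (\<lambda>x. f x + h x) \<in> F"
    and assumption_F_cmult: "f \<in> F \<Longrightarrow> (\<lambda>x. c * f x) \<in> F"
    and assumption_F_const: "(\<lambda>_. c) \<in> F"
    and assumption_F_square: "f \<in> F \<Longrightarrow> (\<lambda>x. (f x)\<^sup>2) \<in> F"
    and assumption_F_integrable: "f \<in> F \<Longrightarrow> integrable \<nu> f"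
    and assumption_F_integrable_kernel: "f0 \<in> F \<Longrightarrow> f1 \<in> F \<Longrightarrow> x \<in> space M \<Longrightarrow>
          integrable (P x) (\<lambda>yz. f0 (fst yz) * f1 (snd yz))"
    and assumption_F_Pop2: "f0 \<in> F \<Longrightarrow> f1 \<in> F \<Longrightarrow> Pop2 P (\<lambda>yz. f0 (fst yz) * f1 (snd yz)) \<in> F"
  using assms unfolding assumption_F_def by auto

lemma
  assumes F: "assumption_F M P \<nu> F" and f: "f \<in> F" and x: "x \<in> space M"
  shows integrable_kernel_fst: "integrable (P x) (\<lambda>yz. f (fst yz))"
    and integrable_kernel_snd: "integrable (P x) (\<lambda>yz. f (snd yz))"
  using assumption_F_integrable_kernel[OF F f assumption_F_const[OF F] x, of 1]
    assumption_F_integrable_kernel[OF F assumption_F_const[OF F] f x, of 1]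
  by simp_all

lemma Qop_in_F:
  assumes F: "assumption_F M P \<nu> F" and f: "f \<in> F"
  shows "Qop P f \<in> F"
proof -
  note one = assumption_F_const[OF F, of 1]
  have "(\<lambda>x. 1/2 * (Pop2 P (\<lambda>yz. f (fst yz) * 1) x + Pop2 P (\<lambda>yz. 1 * f (snd yz)) x)) \<in> F"
    using assumption_F_Pop2[OF F f one] assumption_F_Pop2[OF F one f]
    by (intro assumption_F_cmult[OF F] assumption_F_add[OF F]) simp_all
  then show ?thesis
    by (simp add: Pop2_def Qop_def[abs_def])
qed

lemma Qop_nonneg:
  assumes "P \<in> M \<rightarrow>\<^sub>M prob_algebra (M \<Otimes>\<^sub>M M)"
    and "\<And>y. y \<in> space M \<Longrightarrow> 0 \<le> f y" and "x \<in> space M"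
  shows "0 \<le> Qop P f x"
  using assms space_kernel[OF assms(1,3)]
  unfolding Qop_def by (auto intro!: add_nonneg_nonneg Bochner_Integration.integral_nonneg
      simp: space_pair_measure)

lemma centered_sq_dominator:
  assumes F: "assumption_F M P \<nu> F" and F2: "assumption_F2 M P F \<mu> \<alpha>" and g: "g \<in> F"
    and fs: "\<And>l. fs l \<in> F" and fs_le_g: "\<And>l x. x \<in> space M \<Longrightarrow> \<bar>fs l x\<bar> \<le> g x"
  obtains G where "G \<in> F" and "\<And>x. x \<in> space M \<Longrightarrow> 0 \<le> G x"
    and "\<And>l x. x \<in> space M \<Longrightarrow> (fs l x - (\<integral>y. fs l y \<partial>\<mu>))\<^sup>2 \<le> G x"
proof
  define m where "m = (\<integral>y. g y \<partial>\<mu>)"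
  show "(\<lambda>x. 2 * (g x)\<^sup>2 + 2 * m\<^sup>2) \<in> F"
    using F g by (intro assumption_F_add assumption_F_cmult assumption_F_square assumption_F_const)
  show "0 \<le> 2 * (g x)\<^sup>2 + 2 * m\<^sup>2" for x
    by simp
  have "\<bar>\<integral>y. fs l y \<partial>\<mu>\<bar> \<le> m" for l
    using F2 fs g fs_le_g unfolding assumption_F2_def m_def
    by (intro order_trans[OF integral_abs_bound] integral_mono) (auto dest: sets_eq_imp_space_eq)
  then show "(fs l x - (\<integral>y. fs l y \<partial>\<mu>))\<^sup>2 \<le> 2 * (g x)\<^sup>2 + 2 * m\<^sup>2" if "x \<in> space M" for l x
    using centered_sq_le fs_le_g[OF that] by blast
qed

lemma nn_integral_funpow_Qop_bounded:
  assumes F: "assumption_F M P \<nu> F" and F2: "assumption_F2 M P F \<mu> \<alpha>"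
    and \<nu>: "prob_space \<nu>" "sets \<nu> = sets M" and f: "f \<in> F"
  obtains C where "0 \<le> C" and "\<And>k. (\<integral>\<^sup>+x. ennreal ((Qop P ^^ k) f x) \<partial>\<nu>) \<le> ennreal C"
proof -
  interpret \<nu>: prob_space \<nu> by (rule \<nu>(1))
  have space_\<nu>: "space \<nu> = space M"
    using sets_eq_imp_space_eq[OF \<nu>(2)] .
  define c where "c = (\<integral>y. f y \<partial>\<mu>)"
  obtain H where "H \<in> F" and H: "\<And>k x. x \<in> space M \<Longrightarrow> \<bar>(Qop P ^^ k) f x - c\<bar> \<le> \<alpha> ^ k * H x"
    and \<alpha>: "0 < \<alpha>" "\<alpha> < 1"
    using F2 f unfolding assumption_F2_def c_def by blast
  have H_nonneg: "0 \<le> H x" if "x \<in> space M" for x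
    using H[OF that, of 0] by simp
  have Qf_le: "(Qop P ^^ k) f x \<le> \<bar>c\<bar> + H x" if "x \<in> space M" for k x
  proof -
    have "\<alpha> ^ k * H x \<le> H x"
      using \<alpha> H_nonneg[OF that] by (intro mult_left_le_one_le) (auto simp: power_le_one)
    then show ?thesis using H[OF that, of k] by linarith
  qed
  show thesis
  proof
    show "0 \<le> \<bar>c\<bar> + (\<integral>x. H x \<partial>\<nu>)"
      using H_nonneg space_\<nu> by (intro add_nonneg_nonneg abs_ge_zero Bochner_Integration.integral_nonneg) auto
    have "(\<integral>\<^sup>+x. ennreal ((Qop P ^^ k) f x) \<partial>\<nu>) \<le> (\<integral>\<^sup>+x. ennreal (\<bar>c\<bar> + H x) \<partial>\<nu>)" for k
      using Qf_le space_\<nu> by (intro nn_integral_mono ennreal_leI) auto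
    also have "\<dots> = ennreal (\<bar>c\<bar> + (\<integral>x. H x \<partial>\<nu>))"
      using assumption_F_integrable[OF F \<open>H \<in> F\<close>] H_nonneg space_\<nu>
      by (subst nn_integral_eq_integral) (auto simp: \<nu>.prob_space[unfolded space_\<nu>])
    finally show "(\<integral>\<^sup>+x. ennreal ((Qop P ^^ k) f x) \<partial>\<nu>) \<le> ennreal (\<bar>c\<bar> + (\<integral>x. H x \<partial>\<nu>))"
      for k .
  qed
qed

lemma
  assumes "is_BMC M \<Omega> X \<nu> P"
  shows is_BMC_prob_space: "prob_space \<Omega>"
    and is_BMC_measurable: "X i \<in> \<Omega> \<rightarrow>\<^sub>M M"
    and is_BMC_distr_root: "distr \<Omega> M (X []) = \<nu>"
  using assms by (auto simp: is_BMC_def)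

lemma subalgebra_tree_filtr:
  assumes "\<And>i. X i \<in> \<Omega> \<rightarrow>\<^sub>M M"
  shows "subalgebra \<Omega> (tree_filtr \<Omega> M X k)"
proof -
  let ?G = "\<Union>j\<in>Tree_upto k. {X j -` A \<inter> space \<Omega> | A. A \<in> sets M}"
  have "?G \<subseteq> sets \<Omega>"
    using assms measurable_sets by blast
  moreover from this have "?G \<subseteq> Pow (space \<Omega>)"
    using sets.sets_into_space by blast
  ultimately show ?thesis
    unfolding subalgebra_def tree_filtr_def
    using sigma_le_sets[of ?G "space \<Omega>" \<Omega>] by (simp add: space_measure_of_conv)
qed

lemma nn_integral_BMC_step_bounded:
  assumes bmc: "is_BMC M \<Omega> X \<nu> P"
    and kernel: "P \<in> M \<rightarrow>\<^sub>M prob_algebra (M \<Otimes>\<^sub>M M)"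
    and i: "i \<in> Gen k"
    and \<phi>: "\<phi> \<in> borel_measurable (M \<Otimes>\<^sub>M M \<Otimes>\<^sub>M M)"
    and \<phi>_bounds: "\<And>t. t \<in> space (M \<Otimes>\<^sub>M M \<Otimes>\<^sub>M M) \<Longrightarrow> 0 \<le> \<phi> t \<and> \<phi> t \<le> B"
  shows "(\<integral>\<^sup>+\<omega>. ennreal (\<phi> (X i \<omega>, X (i @ [False]) \<omega>, X (i @ [True]) \<omega>)) \<partial>\<Omega>)
       = (\<integral>\<^sup>+\<omega>. ennreal (Pop3 P \<phi> (X i \<omega>)) \<partial>\<Omega>)"
proof -
  interpret prob_space \<Omega>
    using bmc by (rule is_BMC_prob_space)
  note X = is_BMC_measurable[OF bmc]
  interpret Fk: sigma_finite_subalgebra \<Omega> "tree_filtr \<Omega> M X k"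
    by (intro finite_measure_subalgebra_is_sigma_finite)
      (simp add: finite_measure_subalgebra_def finite_measure_subalgebra_axioms_def
        subalgebra_tree_filtr[OF X] finite_measure_axioms)
  define h where "h \<omega> = \<phi> (X i \<omega>, X (i @ [False]) \<omega>, X (i @ [True]) \<omega>)" for \<omega>
  have h_meas: "h \<in> borel_measurable \<Omega>"
    unfolding h_def by (intro measurable_compose[OF _ \<phi>] measurable_Pair X)
  have h_bounds: "0 \<le> h \<omega> \<and> h \<omega> \<le> B" if "\<omega> \<in> space \<Omega>" for \<omega>
    unfolding h_def using that
    by (intro \<phi>_bounds) (auto simp: space_pair_measure intro!: measurable_space[OF X])
  have h_int: "integrable \<Omega> h"
    using h_meas h_bounds by (intro integrable_const_bound[where B=B]) auto
  have h_nonneg: "AE \<omega> in \<Omega>. 0 \<le> h \<omega>"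
    using h_bounds by auto
  \<comment> \<open>The branching property for the family that is \<open>\<phi>\<close> at \<open>i\<close> and \<open>1\<close> elsewhere is a statement about \<open>h\<close> alone.\<close>
  define gs where "gs j = (if j = i then \<phi> else (\<lambda>_. 1))" for j
  have gs_admissible: "gs j \<in> borel_measurable (M \<Otimes>\<^sub>M M \<Otimes>\<^sub>M M) \<and>
      (\<exists>B. \<forall>t\<in>space (M \<Otimes>\<^sub>M M \<Otimes>\<^sub>M M). \<bar>gs j t\<bar> \<le> B)" for j
  proof (cases "j = i")
    case True
    have "\<forall>t\<in>space (M \<Otimes>\<^sub>M M \<Otimes>\<^sub>M M). \<bar>\<phi> t\<bar> \<le> B"
      using \<phi>_bounds abs_of_nonneg by metis
    then show ?thesis
      using True \<phi> by (intro conjI exI[of _ B]) (simp_all add: gs_def)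
  next
    case False
    then show ?thesis
      by (intro conjI exI[of _ 1]) (simp_all add: gs_def)
  qed
  have prod_gs: "(\<Prod>j\<in>Gen k. gs j (X j \<omega>, X (j @ [False]) \<omega>, X (j @ [True]) \<omega>)) = h \<omega>" for \<omega>
    by (simp add: prod.remove[OF finite_Gen i] gs_def h_def)
  have prod_Pop3_gs: "(\<Prod>j\<in>Gen k. Pop3 P (gs j) (X j \<omega>)) = Pop3 P \<phi> (X i \<omega>)"
    if "\<omega> \<in> space \<Omega>" for \<omega>
    using prob_space.prob_space[OF prob_space_kernel[OF kernel measurable_space[OF X that]]]
    by (simp add: prod.remove[OF finite_Gen i] gs_def Pop3_def)
  have cond_exp: "AE \<omega> in \<Omega>. real_cond_exp \<Omega> (tree_filtr \<Omega> M X k) h \<omega> = Pop3 P \<phi> (X i \<omega>)"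
    using bmc gs_admissible unfolding is_BMC_def
    by (auto simp: prod_gs prod_Pop3_gs elim!: allE[of _ k] allE[of _ gs])
  have "(\<integral>\<^sup>+\<omega>. ennreal (Pop3 P \<phi> (X i \<omega>)) \<partial>\<Omega>)
      = (\<integral>\<^sup>+\<omega>. ennreal (real_cond_exp \<Omega> (tree_filtr \<Omega> M X k) h \<omega>) \<partial>\<Omega>)"
    using cond_exp by (intro nn_integral_cong_AE) auto
  also have "\<dots> = ennreal (\<integral>\<omega>. real_cond_exp \<Omega> (tree_filtr \<Omega> M X k) h \<omega> \<partial>\<Omega>)"
    by (intro nn_integral_eq_integral Fk.real_cond_exp_int(1)[OF h_int]
        Fk.real_cond_exp_pos[OF h_nonneg h_meas])
  also have "\<dots> = (\<integral>\<^sup>+\<omega>. ennreal (h \<omega>) \<partial>\<Omega>)"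
    by (simp add: Fk.real_cond_exp_int(2)[OF h_int] nn_integral_eq_integral[OF h_int h_nonneg])
  finally show ?thesis
    by (simp add: h_def)
qed

lemma nn_integral_children_le_Qop:
  assumes bmc: "is_BMC M \<Omega> X \<nu> P"
    and kernel: "P \<in> M \<rightarrow>\<^sub>M prob_algebra (M \<Otimes>\<^sub>M M)"
    and F: "assumption_F M P \<nu> F" and f: "f \<in> F" and f_nonneg: "\<And>x. x \<in> space M \<Longrightarrow> 0 \<le> f x"
    and i: "i \<in> Gen k"
  shows "(\<integral>\<^sup>+\<omega>. ennreal (f (X (i @ [False]) \<omega>)) \<partial>\<Omega>) + (\<integral>\<^sup>+\<omega>. ennreal (f (X (i @ [True]) \<omega>)) \<partial>\<Omega>)
       \<le> 2 * (\<integral>\<^sup>+\<omega>. ennreal (Qop P f (X i \<omega>)) \<partial>\<Omega>)"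
proof -
  note X = is_BMC_measurable[OF bmc]
  have [measurable]: "f \<in> borel_measurable M" "Qop P f \<in> borel_measurable M"
    using F f by (auto intro: assumption_F_measurable Qop_in_F)
  \<comment> \<open>\<open>is_BMC\<close> only speaks about bounded test functions, hence the truncation at level \<open>N\<close>.\<close>
  define \<phi> where "\<phi> N t = min (f (fst (snd t)) + f (snd (snd t))) (real N)"
    for N :: nat and t :: "'a \<times> 'a \<times> 'a"
  have \<phi>_meas: "\<phi> N \<in> borel_measurable (M \<Otimes>\<^sub>M M \<Otimes>\<^sub>M M)" for N
    unfolding \<phi>_def by measurable
  have \<phi>_bounds: "0 \<le> \<phi> N t \<and> \<phi> N t \<le> real N" if "t \<in> space (M \<Otimes>\<^sub>M M \<Otimes>\<^sub>M M)" for N t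
    using that by (auto simp: \<phi>_def space_pair_measure intro!: add_nonneg_nonneg f_nonneg)
  have Pop3_\<phi>_le: "Pop3 P (\<phi> N) x \<le> 2 * Qop P f x" if "x \<in> space M" for N x
  proof -
    note int = integrable_kernel_fst[OF F f that] integrable_kernel_snd[OF F f that]
    have "integrable (P x) (\<lambda>_. real N)"
      using prob_space.finite_measure[OF prob_space_kernel[OF kernel that]]
      by (rule finite_measure.integrable_const)
    then have "integrable (P x) (\<lambda>yz. min (f (fst yz) + f (snd yz)) (real N))"
      using Bochner_Integration.integrable_add[OF int] by (rule integrable_min[rotated])
    then have "Pop3 P (\<phi> N) x \<le> (\<integral>yz. f (fst yz) + f (snd yz) \<partial>P x)"
      unfolding Pop3_def \<phi>_def using int by (intro integral_mono) auto
    also have "\<dots> = 2 * Qop P f x"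
      using int by (simp add: Qop_def)
    finally show ?thesis .
  qed
  let ?\<phi>X = "\<lambda>N \<omega>. ennreal (\<phi> N (X i \<omega>, X (i @ [False]) \<omega>, X (i @ [True]) \<omega>))"
  have fX_meas: "(\<lambda>\<omega>. ennreal (h (X j \<omega>))) \<in> borel_measurable \<Omega>" if "h \<in> borel_measurable M" for h j
    using that X by measurable
  have \<phi>X_meas: "?\<phi>X N \<in> borel_measurable \<Omega>" for N
    by (intro measurable_compose[OF _ measurable_ennreal] measurable_compose[OF _ \<phi>_meas]
        measurable_Pair X)
  have "(\<integral>\<^sup>+\<omega>. ennreal (f (X (i @ [False]) \<omega>)) \<partial>\<Omega>) + (\<integral>\<^sup>+\<omega>. ennreal (f (X (i @ [True]) \<omega>)) \<partial>\<Omega>)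
      = (\<integral>\<^sup>+\<omega>. ennreal (f (X (i @ [False]) \<omega>)) + ennreal (f (X (i @ [True]) \<omega>)) \<partial>\<Omega>)"
    by (intro nn_integral_add[symmetric] fX_meas) measurable
  also have "\<dots> = (\<integral>\<^sup>+\<omega>. (SUP N. ?\<phi>X N \<omega>) \<partial>\<Omega>)"
    using f_nonneg measurable_space[OF X]
    by (intro nn_integral_cong) (simp add: \<phi>_def SUP_ennreal_min_of_nat ennreal_plus)
  also have "\<dots> = (SUP N. \<integral>\<^sup>+\<omega>. ?\<phi>X N \<omega> \<partial>\<Omega>)"
  proof (rule nn_integral_monotone_convergence_SUP[OF _ \<phi>X_meas])
    show "incseq ?\<phi>X"
      unfolding incseq_def le_fun_def \<phi>_def by (intro allI impI ennreal_leI min.mono) auto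
  qed
  also have "\<dots> = (SUP N. \<integral>\<^sup>+\<omega>. ennreal (Pop3 P (\<phi> N) (X i \<omega>)) \<partial>\<Omega>)"
    using nn_integral_BMC_step_bounded[OF bmc kernel i \<phi>_meas \<phi>_bounds] by simp
  also have "\<dots> \<le> (\<integral>\<^sup>+\<omega>. 2 * ennreal (Qop P f (X i \<omega>)) \<partial>\<Omega>)"
  proof (intro SUP_least nn_integral_mono)
    fix N \<omega>
    assume "\<omega> \<in> space \<Omega>"
    then have "ennreal (Pop3 P (\<phi> N) (X i \<omega>)) \<le> ennreal (2 * Qop P f (X i \<omega>))"
      by (intro ennreal_leI Pop3_\<phi>_le measurable_space[OF X])
    then show "ennreal (Pop3 P (\<phi> N) (X i \<omega>)) \<le> 2 * ennreal (Qop P f (X i \<omega>))"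
      by (simp add: ennreal_mult')
  qed
  also have "\<dots> = 2 * (\<integral>\<^sup>+\<omega>. ennreal (Qop P f (X i \<omega>)) \<partial>\<Omega>)"
    by (intro nn_integral_cmult fX_meas) measurable
  finally show ?thesis .
qed

lemma nn_integral_MA:
  assumes X: "\<And>i. X i \<in> \<Omega> \<rightarrow>\<^sub>M M" and f: "f \<in> borel_measurable M"
    and f_nonneg: "\<And>x. x \<in> space M \<Longrightarrow> 0 \<le> f x" and A: "finite A"
  shows "(\<integral>\<^sup>+\<omega>. ennreal (MA X A f \<omega>) \<partial>\<Omega>) = (\<Sum>i\<in>A. \<integral>\<^sup>+\<omega>. ennreal (f (X i \<omega>)) \<partial>\<Omega>)"
  using nn_integral_sum_cmult[of A "\<lambda>_. 1" "\<lambda>i \<omega>. f (X i \<omega>)" \<Omega>] A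
    measurable_compose[OF X f] f_nonneg measurable_space[OF X]
  by (simp add: MA_def)

lemma nn_integral_MA_Gen_le:
  assumes bmc: "is_BMC M \<Omega> X \<nu> P"
    and kernel: "P \<in> M \<rightarrow>\<^sub>M prob_algebra (M \<Otimes>\<^sub>M M)"
    and F: "assumption_F M P \<nu> F"
    and "f \<in> F" and "\<And>x. x \<in> space M \<Longrightarrow> 0 \<le> f x"
  shows "(\<integral>\<^sup>+\<omega>. ennreal (MA X (Gen k) f \<omega>) \<partial>\<Omega>) \<le> 2 ^ k * (\<integral>\<^sup>+x. ennreal ((Qop P ^^ k) f x) \<partial>\<nu>)"
  using assms(4,5)
proof (induction k arbitrary: f)
  case 0
  note X = is_BMC_measurable[OF bmc]
  have "(\<integral>\<^sup>+x. ennreal (f x) \<partial>\<nu>) = (\<integral>\<^sup>+\<omega>. ennreal (f (X [] \<omega>)) \<partial>\<Omega>)"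
    unfolding is_BMC_distr_root[OF bmc, symmetric]
    using assumption_F_measurable[OF F 0(1)] by (intro nn_integral_distr X) simp
  moreover have "Gen 0 = {[]}"
    by (auto simp: Gen_def)
  ultimately show ?case
    using nn_integral_MA[OF X assumption_F_measurable[OF F 0(1)] 0(2), of "{[]}"] by simp
next
  case (Suc k)
  note X = is_BMC_measurable[OF bmc]
  have Qf: "Qop P f \<in> F" "\<And>x. x \<in> space M \<Longrightarrow> 0 \<le> Qop P f x"
    using Qop_in_F[OF F Suc.prems(1)] Qop_nonneg[OF kernel Suc.prems(2)] by auto
  have "(\<integral>\<^sup>+\<omega>. ennreal (MA X (Gen (Suc k)) f \<omega>) \<partial>\<Omega>)
      = (\<Sum>i\<in>Gen k. (\<integral>\<^sup>+\<omega>. ennreal (f (X (i @ [False]) \<omega>)) \<partial>\<Omega>)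
                   + (\<integral>\<^sup>+\<omega>. ennreal (f (X (i @ [True]) \<omega>)) \<partial>\<Omega>))"
    by (simp add: nn_integral_MA[OF X assumption_F_measurable[OF F Suc.prems(1)] Suc.prems(2)
        finite_Gen] sum_Gen_Suc)
  also have "\<dots> \<le> (\<Sum>i\<in>Gen k. 2 * (\<integral>\<^sup>+\<omega>. ennreal (Qop P f (X i \<omega>)) \<partial>\<Omega>))"
    by (intro sum_mono nn_integral_children_le_Qop[OF bmc kernel F Suc.prems])
  also have "\<dots> = 2 * (\<integral>\<^sup>+\<omega>. ennreal (MA X (Gen k) (Qop P f) \<omega>) \<partial>\<Omega>)"
    by (simp add: nn_integral_MA[OF X assumption_F_measurable[OF F Qf(1)] Qf(2) finite_Gen]
        sum_distrib_left)
  also have "\<dots> \<le> 2 * (2 ^ k * (\<integral>\<^sup>+x. ennreal ((Qop P ^^ k) (Qop P f) x) \<partial>\<nu>))"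
    by (intro mult_left_mono Suc.IH Qf) auto
  also have "\<dots> = 2 ^ Suc k * (\<integral>\<^sup>+x. ennreal ((Qop P ^^ Suc k) f x) \<partial>\<nu>)"
    by (simp add: funpow_Suc_right mult.assoc del: funpow.simps)
  finally show ?case .
qed

lemma sq_R0_le:
  assumes "\<And>l x. x \<in> space M \<Longrightarrow> (fs l x - (\<integral>y. fs l y \<partial>\<mu>))\<^sup>2 \<le> G x"
    and "\<And>i. X i \<omega> \<in> space M"
  shows "(R0 X \<mu> fs p n \<omega>)\<^sup>2 \<le> (\<Sum>k<n - p n. real (n - p n) * 2 ^ k / 2 ^ n * MA X (Gen k) G \<omega>)"
proof -
  define N where "N = n - p n"
  let ?y = "\<lambda>k i. fs (n - k) (X i \<omega>) - (\<integral>y. fs (n - k) y \<partial>\<mu>)"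
  have "(R0 X \<mu> fs p n \<omega>)\<^sup>2 = (\<Sum>k<N. \<Sum>i\<in>Gen k. ?y k i)\<^sup>2 / 2 ^ n"
    by (simp add: R0_def MA_def N_def card_Gen power_mult_distrib power_divide)
  also have "\<dots> \<le> real N * (\<Sum>k<N. 2 ^ k * (\<Sum>i\<in>Gen k. (?y k i)\<^sup>2)) / 2 ^ n"
    by (intro divide_right_mono sq_sum_Gen_le) simp
  also have "\<dots> \<le> real N * (\<Sum>k<N. 2 ^ k * MA X (Gen k) G \<omega>) / 2 ^ n"
    unfolding MA_def using assms by (intro divide_right_mono mult_left_mono sum_mono) auto
  also have "\<dots> = (\<Sum>k<N. real N * 2 ^ k / 2 ^ n * MA X (Gen k) G \<omega>)"
    by (simp add: sum_distrib_left sum_divide_distrib mult_ac)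
  finally show ?thesis
    by (simp add: N_def)
qed

lemma nn_integral_sq_R0_le:
  assumes X: "\<And>i. X i \<in> \<Omega> \<rightarrow>\<^sub>M M"
    and G: "G \<in> borel_measurable M" "\<And>x. x \<in> space M \<Longrightarrow> 0 \<le> G x"
    and G_dominates: "\<And>l x. x \<in> space M \<Longrightarrow> (fs l x - (\<integral>y. fs l y \<partial>\<mu>))\<^sup>2 \<le> G x"
    and C: "0 \<le> C" and moments: "\<And>k. (\<integral>\<^sup>+\<omega>. ennreal (MA X (Gen k) G \<omega>) \<partial>\<Omega>) \<le> ennreal (2 ^ k * C)"
  shows "(\<integral>\<^sup>+\<omega>. ennreal ((R0 X \<mu> fs p n \<omega>)\<^sup>2) \<partial>\<Omega>)
       \<le> ennreal (real (n - p n) * C * 4 ^ (n - p n) / 2 ^ n)"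
proof -
  define N where "N = n - p n"
  define a where "a k = real N * 2 ^ k / 2 ^ n" for k :: nat
  have MA_meas: "MA X (Gen k) G \<in> borel_measurable \<Omega>" for k
    unfolding MA_def[abs_def] using X G(1) by measurable
  have MA_nonneg: "0 \<le> MA X (Gen k) G \<omega>" if "\<omega> \<in> space \<Omega>" for k \<omega>
    unfolding MA_def using G(2) measurable_space[OF X that] by (simp add: sum_nonneg)
  have "(\<integral>\<^sup>+\<omega>. ennreal ((R0 X \<mu> fs p n \<omega>)\<^sup>2) \<partial>\<Omega>)
      \<le> (\<integral>\<^sup>+\<omega>. ennreal (\<Sum>k<N. a k * MA X (Gen k) G \<omega>) \<partial>\<Omega>)"
    unfolding a_def N_def
    by (intro nn_integral_mono ennreal_leI sq_R0_le[OF G_dominates]) (auto intro: measurable_space[OF X])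
  also have "\<dots> = (\<Sum>k<N. ennreal (a k) * (\<integral>\<^sup>+\<omega>. ennreal (MA X (Gen k) G \<omega>) \<partial>\<Omega>))"
    using MA_meas MA_nonneg by (intro nn_integral_sum_cmult) (auto simp: a_def)
  also have "\<dots> \<le> (\<Sum>k<N. ennreal (a k) * ennreal (2 ^ k * C))"
    by (intro sum_mono mult_left_mono moments) auto
  also have "\<dots> = ennreal (real N * C / 2 ^ n * (\<Sum>k<N. 4 ^ k))"
    using C by (simp add: a_def ennreal_mult[symmetric] sum_distrib_left sum_divide_distrib
        power_mult_distrib[symmetric] mult_ac)
  also have "\<dots> \<le> ennreal (real N * C / 2 ^ n * 4 ^ N)"
    using C by (intro ennreal_leI mult_left_mono) (auto intro: sum_power_le_power)
  finally show ?thesis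
    by (simp add: N_def mult_ac)
qed

lemma LIMSEQ_gap_mult_pow4_div_pow2:
  fixes p :: "nat \<Rightarrow> nat" and C :: real
  assumes "(\<lambda>n. real (p n) / real n) \<longlonglongrightarrow> 1"
  shows "(\<lambda>n. real (n - p n) * C * 4 ^ (n - p n) / 2 ^ n) \<longlonglongrightarrow> 0"
proof (rule Lim_null_comparison)
  have "(\<lambda>n. real n * 2 powr (- real n / 2)) \<longlonglongrightarrow> 0"
    by real_asymp
  then show "(\<lambda>n. \<bar>C\<bar> * (real n * 2 powr (- real n / 2))) \<longlonglongrightarrow> 0"
    by (rule tendsto_mult_right_zero)
  have "\<forall>\<^sub>F n in sequentially. 3/4 < real (p n) / real n"
    using assms by (rule order_tendstoD(1)) simp
  then show "\<forall>\<^sub>F n in sequentially.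
      norm (real (n - p n) * C * 4 ^ (n - p n) / 2 ^ n) \<le> \<bar>C\<bar> * (real n * 2 powr (- real n / 2))"
  proof (rule eventually_mono)
    fix n
    assume ratio: "3/4 < real (p n) / real n"
    then have n_pos: "0 < real n"
      by (cases "n = 0") auto
    with ratio have p_large: "3/4 * real n < real (p n)"
      by (simp add: field_simps)
    have gap: "real (n - p n) \<le> real n / 4"
    proof (cases "p n \<le> n")
      case True
      then show ?thesis
        using p_large of_nat_diff[OF True] by linarith
    qed simp
    have "(4::real) ^ (n - p n) = 2 powr (2 * real (n - p n))"
      by (simp add: powr_realpow[symmetric] powr_mult[symmetric] power_mult[symmetric]
          powr_powr[symmetric])
    moreover have "(2::real) ^ n = 2 powr real n"
      by (simp add: powr_realpow)
    ultimately have "(4::real) ^ (n - p n) / 2 ^ n = 2 powr (2 * real (n - p n) - real n)"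
      by (simp add: powr_diff)
    also have "\<dots> \<le> 2 powr (- real n / 2)"
      using gap by (intro powr_mono) auto
    finally have pow: "(4::real) ^ (n - p n) / 2 ^ n \<le> 2 powr (- real n / 2)" .
    have "norm (real (n - p n) * C * 4 ^ (n - p n) / 2 ^ n)
        = \<bar>C\<bar> * (real (n - p n) * ((4::real) ^ (n - p n) / 2 ^ n))"
      by (simp add: abs_mult)
    also have "\<dots> \<le> \<bar>C\<bar> * (real n * 2 powr (- real n / 2))"
      using gap n_pos pow by (intro mult_left_mono mult_mono) auto
    finally show "norm (real (n - p n) * C * 4 ^ (n - p n) / 2 ^ n)
        \<le> \<bar>C\<bar> * (real n * 2 powr (- real n / 2))" .
  qed
qed

theorem lemma4p1:
  fixes M :: "'a measure" and \<Omega> :: "'w measure" and X :: "bool list \<Rightarrow> 'w \<Rightarrow> 'a"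
    and \<nu> \<mu> :: "'a measure" and P :: "'a \<Rightarrow> ('a \<times> 'a) measure"
    and F :: "('a \<Rightarrow> real) set" and \<alpha> :: real
    and fs :: "nat \<Rightarrow> 'a \<Rightarrow> real" and g :: "'a \<Rightarrow> real" and p :: "nat \<Rightarrow> nat"
  assumes kernel: "P \<in> M \<rightarrow>\<^sub>M prob_algebra (M \<Otimes>\<^sub>M M)"
    and init: "prob_space \<nu>" "sets \<nu> = sets M"
    and bmc: "is_BMC M \<Omega> X \<nu> P"
    and F: "assumption_F M P \<nu> F"
    and F2: "assumption_F2 M P F \<mu> \<alpha>"
    and alpha: "\<alpha> < 1 / sqrt 2"
    and fs_F: "\<forall>l. fs l \<in> F"
    and g_F: "g \<in> F"
    and bound1: "\<forall>n l. \<forall>x\<in>space M. \<bar>(Qop P ^^ n) (fs l) x\<bar> \<le> g x"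
    and bound2: "\<forall>n l. \<forall>x\<in>space M.
                   \<bar>(Qop P ^^ n) (fs l) x - (\<integral>y. fs l y \<partial>\<mu>)\<bar> \<le> \<alpha> ^ n * g x"
    and p_mono: "mono p"
    and p_pos: "\<forall>n. 0 < p n"
    and p_less: "\<forall>n\<ge>2. p n < n"
    and p_ratio: "(\<lambda>n. real (p n) / real n) \<longlonglongrightarrow> 1"
    and p_gap: "\<forall>c::real>0. filterlim (\<lambda>n. real n - real (p n) - c * ln (real n)) at_top sequentially"
  shows "(\<lambda>n. \<integral>\<^sup>+\<omega>. ennreal ((R0 X \<mu> fs p n \<omega>)\<^sup>2) \<partial>\<Omega>) \<longlonglongrightarrow> 0"
proof -
  have X: "\<And>i. X i \<in> \<Omega> \<rightarrow>\<^sub>M M"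
    using bmc by (rule is_BMC_measurable)
  have "\<bar>fs l x\<bar> \<le> g x" if "x \<in> space M" for l x
    using bound1 that by (metis funpow_0)
  then obtain G where G: "G \<in> F" "\<And>x. x \<in> space M \<Longrightarrow> 0 \<le> G x"
    and G_dominates: "\<And>l x. x \<in> space M \<Longrightarrow> (fs l x - (\<integral>y. fs l y \<partial>\<mu>))\<^sup>2 \<le> G x"
    using centered_sq_dominator[OF F F2 g_F] fs_F by blast
  obtain C where C: "0 \<le> C" "\<And>k. (\<integral>\<^sup>+x. ennreal ((Qop P ^^ k) G x) \<partial>\<nu>) \<le> ennreal C"
    using nn_integral_funpow_Qop_bounded[OF F F2 init G(1)] by blast
  have moments: "(\<integral>\<^sup>+\<omega>. ennreal (MA X (Gen k) G \<omega>) \<partial>\<Omega>) \<le> ennreal (2 ^ k * C)" for k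
    using order_trans[OF nn_integral_MA_Gen_le[OF bmc kernel F G] mult_left_mono[OF C(2)]] C(1)
    by (simp add: ennreal_mult flip: ennreal_power)
  have upper: "(\<integral>\<^sup>+\<omega>. ennreal ((R0 X \<mu> fs p n \<omega>)\<^sup>2) \<partial>\<Omega>)
      \<le> ennreal (real (n - p n) * C * 4 ^ (n - p n) / 2 ^ n)" for n
    using nn_integral_sq_R0_le[OF X assumption_F_measurable[OF F G(1)] G(2) G_dominates C(1) moments] .
  have upper_lim: "(\<lambda>n. ennreal (real (n - p n) * C * 4 ^ (n - p n) / 2 ^ n)) \<longlonglongrightarrow> 0"
    using tendsto_ennrealI[OF LIMSEQ_gap_mult_pow4_div_pow2[OF p_ratio]] unfolding ennreal_0 .
  show ?thesis
    by (rule tendsto_sandwich[OF _ _ tendsto_const upper_lim]) (simp_all add: upper)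
qed

end
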